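(* Let $n\geq 2$ and let $G$ be the $(2n+1)$-dimensional Heisenberg group $G=\langle x_1,\dots,x_{2n+1}\mid [x_i,x_{n+i}]=x_{2n+1}\ (1\le i\le n),\ \text{all other pairs } x_j,x_k\text{ commute}\rangle$ with Mal'cev basis $(x_1,\dots,x_{2n+1})$. Then for every ordering of a basis of the module $M$ for which the Nickel representation is upper unitriangular, the image of $G$ in $UT_{2n+2}(\mathbb{Z})$ is a distorted subgroup.
   Context: Every $g\in G$ is uniquely $x_1^{a_1}\cdots x_{2n+1}^{a_{2n+1}}$, $a_i\in\mathbb{Z}$. Let $t_i:G\to\mathbb{Z}$ map $x_1^{a_1}\cdots x_{2n+1}^{a_{2n+1}}\mapsto a_i$, viewed in the dual $(\mathbb{Q}G)^*$; $G$ acts on $(\mathbb{Q}G)^*$ by $f^g(h)=f(hg^{-1})$. The $G$-submodule $M$ generated by $t_1,\dots,t_{2n+1}$ is finite-dimensional and faithful (here with $\mathbb{Q}$-basis $\{t_1,\dots,t_{2n+1},1\}$); ordering a basis so that all matrices are upper unitriangular gives the Nickel embedding $G\to UT_{2n+2}(\mathbb{Z})$, the group of upper unitriangular integer matrices. A subgroup $H$ of a finitely generated group $K$ is distorted if $\Delta_H^K(n)=\max\{dist_H(1,h): h\in H, dist_K(1,h)\le n\}$ (word metrics) is not bounded by $Cn$ for any constant $C$. *)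

theory Defs
  imports "Jordan_Normal_Form.Matrix" "HOL-Algebra.Generated_Groups"
begin

definition word_length :: "('a, 'b) monoid_scheme \<Rightarrow> 'a set \<Rightarrow> 'a \<Rightarrow> nat" where
  "word_length G S g =
     (LEAST k. \<exists>ws. length ws = k \<and> set ws \<subseteq> S \<union> (\<lambda>s. inv\<^bsub>G\<^esub> s) ` S
                  \<and> foldr (\<otimes>\<^bsub>G\<^esub>) ws \<one>\<^bsub>G\<^esub> = g)"

definition distortion_fn ::
  "('a, 'b) monoid_scheme \<Rightarrow> 'a set \<Rightarrow> 'a set \<Rightarrow> 'a set \<Rightarrow> nat \<Rightarrow> nat" where
  "distortion_fn K H S T m =
     Max {word_length (K\<lparr>carrier := H\<rparr>) S h | h. h \<in> H \<and> word_length K T h \<le> m}"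

definition distorted_subgroup :: "('a, 'b) monoid_scheme \<Rightarrow> 'a set \<Rightarrow> bool" where
  "distorted_subgroup K H \<longleftrightarrow>
     group K \<and> subgroup H K \<and>
     (\<exists>T. finite T \<and> T \<subseteq> carrier K \<and> generate K T = carrier K) \<and>
     (\<exists>S. finite S \<and> S \<subseteq> H \<and> generate K S = H) \<and>
     (\<forall>S T. finite S \<and> S \<subseteq> H \<and> generate K S = H \<and>
            finite T \<and> T \<subseteq> carrier K \<and> generate K T = carrier K \<longrightarrow>
            \<not> (\<exists>C::real. \<forall>m. real (distortion_fn K H S T m) \<le> C * real m))"

definition UT :: "nat \<Rightarrow> int mat set" where
  "UT N = {A \<in> carrier_mat N N. \<forall>i<N. A $$ (i,i) = 1 \<and> (\<forall>j<i. A $$ (i,j) = 0)}"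

definition UT_group :: "nat \<Rightarrow> int mat monoid" where
  "UT_group N = \<lparr>carrier = UT N, mult = (*), one = 1\<^sub>m N\<rparr>"

text \<open>An element x_1^{a_1} ... x_{2n+1}^{a_{2n+1}} is represented by its coordinate
  function a (a i for 1 \<le> i \<le> 2n+1, zero elsewhere). The product is obtained by the
  collection process from the relations [x_i, x_{n+i}] = x_{2n+1} with
  [x,y] = x^{-1} y^{-1} x y, x_{2n+1} central, all other generators commuting.\<close>
definition heis_carrier :: "nat \<Rightarrow> (nat \<Rightarrow> int) set" where
  "heis_carrier n = {a. \<forall>i. (i = 0 \<or> i > 2*n+1) \<longrightarrow> a i = 0}"

definition heis_mult :: "nat \<Rightarrow> (nat \<Rightarrow> int) \<Rightarrow> (nat \<Rightarrow> int) \<Rightarrow> (nat \<Rightarrow> int)" where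
  "heis_mult n a b = (\<lambda>i.
     if 1 \<le> i \<and> i \<le> 2*n then a i + b i
     else if i = 2*n+1 then a i + b i - (\<Sum>k=1..n. a (n+k) * b k)
     else 0)"

definition heis :: "nat \<Rightarrow> (nat \<Rightarrow> int) monoid" where
  "heis n = \<lparr>carrier = heis_carrier n, mult = heis_mult n, one = (\<lambda>_. 0)\<rparr>"

text \<open>Basis of M, indexed by 0..2n+1: index j \<le> 2n is t_{j+1}, index 2n+1 is the
  constant function 1. Functions G \<rightarrow> Q.\<close>
definition nickel_basis :: "nat \<Rightarrow> nat \<Rightarrow> (nat \<Rightarrow> int) \<Rightarrow> rat" where
  "nickel_basis n j = (if j \<le> 2*n then (\<lambda>h. of_int (h (j+1))) else (\<lambda>h. 1))"

definition dual_act :: "nat \<Rightarrow> (nat \<Rightarrow> int) \<Rightarrow> ((nat \<Rightarrow> int) \<Rightarrow> rat) \<Rightarrow> ((nat \<Rightarrow> int) \<Rightarrow> rat)" where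
  "dual_act n g f = (\<lambda>h. f (heis_mult n h (inv\<^bsub>heis n\<^esub> g)))"

text \<open>Matrix of g w.r.t. the ordered basis (position p holds basis element sigma p):
  row p contains the coefficients of (basis (sigma p))^g; since the action is a right
  action, g \<mapsto> matrix is then a homomorphism.\<close>
definition nickel_rep :: "nat \<Rightarrow> (nat \<Rightarrow> nat) \<Rightarrow> (nat \<Rightarrow> int) \<Rightarrow> int mat" where
  "nickel_rep n \<sigma> g = (THE A. A \<in> carrier_mat (2*n+2) (2*n+2) \<and>
      (\<forall>p < 2*n+2. \<forall>h \<in> heis_carrier n.
         dual_act n g (nickel_basis n (\<sigma> p)) h
           = (\<Sum>q < 2*n+2. of_int (A $$ (p,q)) * nickel_basis n (\<sigma> q) h)))"

end

theory Submission
  imports Defs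
begin

text \<open>The central element \<open>x\<^sub>2\<^sub>n\<^sub>+\<^sub>1\<^sup>c\<close> acts
  as the transvection \<open>1 - c E\<^sub>p\<^sub>q\<close>, where \<open>p\<close> and \<open>q\<close> are the positions of \<open>t\<^sub>2\<^sub>n\<^sub>+\<^sub>1\<close> and of
  the constant \<open>1\<close> in the ordered basis. Triangularity of the images of \<open>x\<^sub>1, x\<^sub>2, x\<^sub>n\<^sub>+\<^sub>1, x\<^sub>n\<^sub>+\<^sub>2\<close>
  forces two further basis vectors strictly between \<open>p\<close> and \<open>q\<close> (this is where \<open>n \<ge> 2\<close>
  enters), so \<open>1 + a\<^sup>3 E\<^sub>p\<^sub>q\<close> is an iterated commutator of powers \<open>a\<close> of elementary matrices
  and has word length \<open>O(a)\<close> in \<open>UT\<^sub>2\<^sub>n\<^sub>+\<^sub>2(\<int>)\<close>. In the Heisenberg group, on the other hand,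
  a product of \<open>k\<close> generators has last coordinate \<open>O(k\<^sup>2)\<close>, so the word length of the same
  element in the image of \<open>G\<close> is at least of order \<open>a\<^bsup>3/2\<^esup>\<close>.\<close>

section \<open>Words and word length\<close>

context group
begin

lemma foldr_mult_closed: "set ws \<subseteq> carrier G \<Longrightarrow> foldr (\<otimes>) ws \<one> \<in> carrier G"
  by (induction ws) auto

lemma foldr_mult_init:
  "set ws \<subseteq> carrier G \<Longrightarrow> x \<in> carrier G \<Longrightarrow> foldr (\<otimes>) ws x = foldr (\<otimes>) ws \<one> \<otimes> x"
  by (induction ws) (auto simp: m_assoc foldr_mult_closed)

lemma foldr_mult_append:
  "set ws \<subseteq> carrier G \<Longrightarrow> set vs \<subseteq> carrier G \<Longrightarrow>
   foldr (\<otimes>) (ws @ vs) \<one> = foldr (\<otimes>) ws \<one> \<otimes> foldr (\<otimes>) vs \<one>"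
proof -
  assume "set ws \<subseteq> carrier G" "set vs \<subseteq> carrier G"
  then show ?thesis
    using foldr_mult_init[of ws "foldr (\<otimes>) vs \<one>"] foldr_mult_closed[of vs] by simp
qed

lemma foldr_mult_rev_inv:
  "set ws \<subseteq> carrier G \<Longrightarrow> foldr (\<otimes>) (rev (map (\<lambda>x. inv x) ws)) \<one> = inv (foldr (\<otimes>) ws \<one>)"
proof (induction ws)
  case (Cons a ws)
  then have "foldr (\<otimes>) (rev (map (\<lambda>x. inv x) (a # ws))) \<one> = inv (foldr (\<otimes>) ws \<one>) \<otimes> inv a"
    using foldr_mult_append[of "rev (map (\<lambda>x. inv x) ws)" "[inv a]"] by auto
  also have "\<dots> = inv (a \<otimes> foldr (\<otimes>) ws \<one>)"
    using Cons.prems foldr_mult_closed[of ws] by (simp add: inv_mult_group)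
  finally show ?case by simp
qed simp

lemma generate_imp_word:
  assumes "T \<subseteq> carrier G" "x \<in> generate G T"
  obtains ws where "set ws \<subseteq> T \<union> (\<lambda>s. inv s) ` T" "foldr (\<otimes>) ws \<one> = x"
proof -
  have "\<exists>ws. set ws \<subseteq> T \<union> (\<lambda>s. inv s) ` T \<and> foldr (\<otimes>) ws \<one> = x"
    using assms(2)
  proof (induction rule: generate.induct)
    case one show ?case by (intro exI[of _ "[]"]) simp
  next
    case (incl h) with assms(1) show ?case by (intro exI[of _ "[h]"]) auto
  next
    case (inv h) with assms(1) show ?case by (intro exI[of _ "[inv h]"]) auto
  next
    case (eng h1 h2)
    then obtain w1 w2 where "set w1 \<subseteq> T \<union> (\<lambda>s. inv s) ` T" "foldr (\<otimes>) w1 \<one> = h1"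
      "set w2 \<subseteq> T \<union> (\<lambda>s. inv s) ` T" "foldr (\<otimes>) w2 \<one> = h2" by blast
    moreover have "set w1 \<subseteq> carrier G" "set w2 \<subseteq> carrier G"
      using calculation assms(1) by auto
    ultimately show ?case
      using foldr_mult_append[of w1 w2] by (intro exI[of _ "w1 @ w2"]) auto
  qed
  with that show ?thesis by blast
qed

lemma word_length_le:
  "set ws \<subseteq> T \<union> (\<lambda>s. inv s) ` T \<Longrightarrow> foldr (\<otimes>) ws \<one> = x \<Longrightarrow> word_length G T x \<le> length ws"
  unfolding word_length_def by (rule Least_le) blast

lemma word_length_witness:
  assumes "T \<subseteq> carrier G" "x \<in> generate G T"
  obtains ws where "length ws = word_length G T x" "set ws \<subseteq> T \<union> (\<lambda>s. inv s) ` T" "foldr (\<otimes>) ws \<one> = x"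
proof -
  obtain ws where "set ws \<subseteq> T \<union> (\<lambda>s. inv s) ` T" "foldr (\<otimes>) ws \<one> = x"
    using generate_imp_word[OF assms] .
  then have "\<exists>k ws. length ws = k \<and> set ws \<subseteq> T \<union> (\<lambda>s. inv s) ` T \<and> foldr (\<otimes>) ws \<one> = x" by blast
  from LeastI_ex[OF this] that show ?thesis unfolding word_length_def by blast
qed

lemma word_length_mult:
  assumes T: "T \<subseteq> carrier G" and x: "x \<in> generate G T" and y: "y \<in> generate G T"
  shows "word_length G T (x \<otimes> y) \<le> word_length G T x + word_length G T y"
proof -
  obtain ws vs where ws: "length ws = word_length G T x" "set ws \<subseteq> T \<union> (\<lambda>s. inv s) ` T" "foldr (\<otimes>) ws \<one> = x"
    and vs: "length vs = word_length G T y" "set vs \<subseteq> T \<union> (\<lambda>s. inv s) ` T" "foldr (\<otimes>) vs \<one> = y"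
    using word_length_witness[OF T x] word_length_witness[OF T y] by metis
  have "foldr (\<otimes>) (ws @ vs) \<one> = x \<otimes> y"
    using ws vs T by (subst foldr_mult_append) auto
  then show ?thesis
    using word_length_le[of "ws @ vs"] ws vs by simp
qed

lemma word_length_inv:
  assumes T: "T \<subseteq> carrier G" and x: "x \<in> generate G T"
  shows "word_length G T (inv x) \<le> word_length G T x"
proof -
  obtain ws where ws: "length ws = word_length G T x" "set ws \<subseteq> T \<union> (\<lambda>s. inv s) ` T" "foldr (\<otimes>) ws \<one> = x"
    using word_length_witness[OF T x] .
  have "set (rev (map (\<lambda>x. inv x) ws)) \<subseteq> T \<union> (\<lambda>s. inv s) ` T"
    using ws(2) T by (auto simp: subset_iff)
  moreover have "foldr (\<otimes>) (rev (map (\<lambda>x. inv x) ws)) \<one> = inv x"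
    using ws T by (subst foldr_mult_rev_inv) auto
  ultimately show ?thesis
    using word_length_le[of "rev (map (\<lambda>x. inv x) ws)" T "inv x"] ws(1) by simp
qed

lemma word_length_nat_pow:
  assumes T: "T \<subseteq> carrier G" and x: "x \<in> generate G T"
  shows "word_length G T (x [^] k) \<le> k * word_length G T x"
proof (induction k)
  case 0
  show ?case
    using word_length_le[of "[]" T \<one>] by simp
next
  case (Suc k)
  have "x [^] k \<in> generate G T"
    using subgroup_int_pow_closed[OF generate_is_subgroup[OF T] x, of "int k"] by (simp add: int_pow_int)
  then have "word_length G T (x [^] k \<otimes> x) \<le> word_length G T (x [^] k) + word_length G T x"
    by (rule word_length_mult[OF T _ x])
  with Suc show ?case by simp
qed

lemma word_length_commutator:
  assumes T: "T \<subseteq> carrier G" and x: "x \<in> generate G T" and y: "y \<in> generate G T"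
  shows "word_length G T (inv x \<otimes> (inv y \<otimes> (x \<otimes> y))) \<le> 2 * (word_length G T x + word_length G T y)"
proof -
  interpret sub: subgroup "generate G T" G by (rule generate_is_subgroup[OF T])
  have "word_length G T (inv x \<otimes> (inv y \<otimes> (x \<otimes> y)))
      \<le> word_length G T (inv x) + word_length G T (inv y \<otimes> (x \<otimes> y))"
    using x y by (intro word_length_mult[OF T]) auto
  also have "\<dots> \<le> word_length G T (inv x) + (word_length G T (inv y) + word_length G T (x \<otimes> y))"
    using x y by (intro add_left_mono word_length_mult[OF T]) auto
  also have "\<dots> \<le> word_length G T (inv x) + (word_length G T (inv y) + (word_length G T x + word_length G T y))"
    using x y by (intro add_left_mono word_length_mult[OF T]) auto
  also have "\<dots> \<le> 2 * (word_length G T x + word_length G T y)"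
    using word_length_inv[OF T x] word_length_inv[OF T y] by simp
  finally show ?thesis .
qed

lemma finite_word_length_le:
  assumes "finite T" "T \<subseteq> carrier G"
  shows "finite {x \<in> generate G T. word_length G T x \<le> m}"
proof (rule finite_subset)
  show "{x \<in> generate G T. word_length G T x \<le> m}
        \<subseteq> (\<lambda>ws. foldr (\<otimes>) ws \<one>) ` {ws. set ws \<subseteq> T \<union> (\<lambda>s. inv s) ` T \<and> length ws \<le> m}"
  proof
    fix x assume "x \<in> {x \<in> generate G T. word_length G T x \<le> m}"
    then obtain ws where "length ws = word_length G T x" "set ws \<subseteq> T \<union> (\<lambda>s. inv s) ` T"
      "foldr (\<otimes>) ws \<one> = x" "word_length G T x \<le> m"
      using word_length_witness[OF assms(2)] by blast
    then show "x \<in> (\<lambda>ws. foldr (\<otimes>) ws \<one>) ` {ws. set ws \<subseteq> T \<union> (\<lambda>s. inv s) ` T \<and> length ws \<le> m}"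
      by force
  qed
  show "finite ((\<lambda>ws. foldr (\<otimes>) ws \<one>) ` {ws. set ws \<subseteq> T \<union> (\<lambda>s. inv s) ` T \<and> length ws \<le> m})"
    using assms(1) by (intro finite_imageI finite_lists_length_le) auto
qed

lemma subgroup_word_length_witness:
  assumes H: "subgroup H G" and S: "S \<subseteq> H" "generate G S = H" and x: "x \<in> H"
  obtains ws where "length ws = word_length (G\<lparr>carrier := H\<rparr>) S x"
    "set ws \<subseteq> S \<union> (\<lambda>s. inv s) ` S" "foldr (\<otimes>) ws \<one> = x"
proof -
  interpret H: group "G\<lparr>carrier := H\<rparr>"
    by (rule subgroup.subgroup_is_group[OF H is_group])
  have "S \<subseteq> carrier (G\<lparr>carrier := H\<rparr>)" "x \<in> generate (G\<lparr>carrier := H\<rparr>) S"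
    using generate_consistent[OF S(1) H] S x by simp_all
  then obtain ws where ws: "length ws = word_length (G\<lparr>carrier := H\<rparr>) S x"
    "set ws \<subseteq> S \<union> (\<lambda>s. inv\<^bsub>G\<lparr>carrier := H\<rparr>\<^esub> s) ` S" "foldr (\<otimes>) ws \<one> = x"
    by (rule H.word_length_witness) simp
  have "(\<lambda>s. inv\<^bsub>G\<lparr>carrier := H\<rparr>\<^esub> s) ` S = (\<lambda>s. inv s) ` S"
    using m_inv_consistent[OF H] S(1) by (intro image_cong) auto
  with ws that show ?thesis
    by simp
qed

lemma word_length_le_distortion_fn:
  assumes H: "subgroup H G" and T: "finite T" "T \<subseteq> carrier G" "generate G T = carrier G"
    and h: "h \<in> H" "word_length G T h \<le> m"
  shows "word_length (G\<lparr>carrier := H\<rparr>) S h \<le> distortion_fn G H S T m"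
proof -
  let ?lengths = "{word_length (G\<lparr>carrier := H\<rparr>) S h' | h'. h' \<in> H \<and> word_length G T h' \<le> m}"
  have "?lengths \<subseteq> word_length (G\<lparr>carrier := H\<rparr>) S ` {x \<in> generate G T. word_length G T x \<le> m}"
    using subgroup.subset[OF H] T(3) by auto
  then have "finite ?lengths"
    using finite_word_length_le[OF T(1,2)] by (rule finite_subset[OF _ finite_imageI])
  then show ?thesis
    unfolding distortion_fn_def using h by (intro Max_ge) auto
qed

lemma additive_eq_int_pow:
  assumes closed: "\<And>a. f a \<in> carrier G" and add: "\<And>a b. f (a + b) = f a \<otimes> f b"
  shows "f c = f 1 [^] (c::int)"
proof (induction c rule: int_induct[of _ 0])
  case base
  have "f 0 \<otimes> f 0 = f 0"
    using add[of 0 0] by simp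
  then show ?case
    using closed l_cancel_one[of "f 0" "f 0"] by simp
next
  case (step1 c)
  then show ?case using closed add by (simp add: int_pow_mult)
next
  case (step2 c)
  have "f (c - 1) = f c \<otimes> inv (f 1)"
    using add[of "c - 1" 1] closed by (simp add: m_assoc)
  then show ?case
    using step2 closed by (simp add: int_pow_diff)
qed

end

lemma (in group_hom) hom_foldr_mult:
  "set gs \<subseteq> carrier G \<Longrightarrow> h (foldr (\<otimes>\<^bsub>G\<^esub>) gs \<one>\<^bsub>G\<^esub>) = foldr (\<otimes>\<^bsub>H\<^esub>) (map h gs) \<one>\<^bsub>H\<^esub>"
  by (induction gs) (auto simp: G.foldr_mult_closed)


section \<open>Upper unitriangular matrices\<close>

lemma index_mult_mat_sum:
  assumes "A \<in> carrier_mat N N" "B \<in> carrier_mat N N" "r < N" "s < N"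
  shows "(A * B) $$ (r,s) = (\<Sum>t<N. A $$ (r,t) * B $$ (t,s))"
  using assms by (simp add: scalar_prod_def atLeast0LessThan)

lemma sum_three_deltas:
  fixes R :: "nat \<Rightarrow> 'a::comm_ring_1"
  assumes "a < N" "b < N" "c < N"
  shows "(\<Sum>t<N. ((if t = a then x else 0) + (if t = b then y else 0) + (if t = c then z else 0)) * R t)
         = x * R a + y * R b + z * R c"
proof -
  have e: "\<And>P (u::'a) v. (if P then u else 0) * v = (if P then u * v else 0)" by simp
  show ?thesis
    using assms by (simp only: distrib_right sum.distrib e sum.delta finite_lessThan) simp
qed

definition transvection :: "nat \<Rightarrow> nat \<Rightarrow> nat \<Rightarrow> int \<Rightarrow> int mat" where
  "transvection N i j c = mat N N (\<lambda>(r,s). (if r = s then 1 else 0) + (if r = i \<and> s = j then c else 0))"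

lemma transvection_carrier [simp]: "transvection N i j c \<in> carrier_mat N N"
  by (simp add: transvection_def)

lemma transvection_dims [simp]: "dim_row (transvection N i j c) = N" "dim_col (transvection N i j c) = N"
  by (simp_all add: transvection_def)

lemma index_transvection [simp]:
  "r < N \<Longrightarrow> s < N \<Longrightarrow> transvection N i j c $$ (r,s) = (if r = s then 1 else 0) + (if r = i \<and> s = j then c else 0)"
  by (simp add: transvection_def)

lemma transvection_zero: "transvection N i j 0 = 1\<^sub>m N"
  by (rule eq_matI) auto

lemma transvection_mult_index:
  assumes "A \<in> carrier_mat N N" "i < N" "j < N" "r < N" "s < N"
  shows "(transvection N i j c * A) $$ (r,s) = A $$ (r,s) + (if r = i then c * A $$ (j,s) else 0)"
proof -
  have "(transvection N i j c * A) $$ (r,s)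
      = (\<Sum>t<N. ((if t = r then 1 else 0) + (if t = j then (if r = i then c else 0) else 0) + (if t = j then 0 else 0)) * A $$ (t,s))"
    using assms by (subst index_mult_mat_sum) (auto intro!: sum.cong)
  also have "\<dots> = A $$ (r,s) + (if r = i then c * A $$ (j,s) else 0)"
    using assms by (subst sum_three_deltas) auto
  finally show ?thesis .
qed

lemma transvection_add:
  "i \<noteq> j \<Longrightarrow> i < N \<Longrightarrow> j < N \<Longrightarrow> transvection N i j a * transvection N i j b = transvection N i j (a + b)"
  by (rule eq_matI) (auto simp del: index_mult_mat(1) simp: transvection_mult_index)

text \<open>The matrices \<open>1 + a E\<^sub>i\<^sub>j + b E\<^sub>j\<^sub>k + c E\<^sub>i\<^sub>k\<close> form a copy of the three-dimensional
  Heisenberg group, in which the commutator of two transvections is computed.\<close>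

definition heis_block :: "nat \<Rightarrow> nat \<Rightarrow> nat \<Rightarrow> nat \<Rightarrow> int \<Rightarrow> int \<Rightarrow> int \<Rightarrow> int mat" where
  "heis_block N i j k a b c = mat N N (\<lambda>(r,s). (if r = s then 1 else 0) + (if r = i \<and> s = j then a else 0)
      + (if r = j \<and> s = k then b else 0) + (if r = i \<and> s = k then c else 0))"

lemma heis_block_mult:
  assumes "i < j" "j < k" "k < N"
  shows "heis_block N i j k a b c * heis_block N i j k a' b' c' = heis_block N i j k (a + a') (b + b') (c + c' + a * b')"
proof (rule eq_matI)
  fix r s assume "r < dim_row (heis_block N i j k (a + a') (b + b') (c + c' + a * b'))"
    "s < dim_col (heis_block N i j k (a + a') (b + b') (c + c' + a * b'))"
  then have rs: "r < N" "s < N" by (auto simp: heis_block_def)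
  let ?R = "\<lambda>t. heis_block N i j k a' b' c' $$ (t,s)"
  have "(heis_block N i j k a b c * heis_block N i j k a' b' c') $$ (r,s)
      = (\<Sum>t<N. ((if t = r then 1 else 0) + (if t = j then (if r = i then a else 0) else 0)
          + (if t = k then (if r = j then b else 0) + (if r = i then c else 0) else 0)) * ?R t)"
    using assms rs by (subst index_mult_mat_sum) (auto simp: heis_block_def intro!: sum.cong)
  also have "\<dots> = ?R r + (if r = i then a else 0) * ?R j + ((if r = j then b else 0) + (if r = i then c else 0)) * ?R k"
    using assms rs by (subst sum_three_deltas) auto
  also have "\<dots> = heis_block N i j k (a + a') (b + b') (c + c' + a * b') $$ (r,s)"
    using assms rs by (auto simp: heis_block_def algebra_simps)
  finally show "(heis_block N i j k a b c * heis_block N i j k a' b' c') $$ (r,s)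
      = heis_block N i j k (a + a') (b + b') (c + c' + a * b') $$ (r,s)" .
qed (auto simp: heis_block_def)

lemma transvection_commutator:
  assumes "i < j" "j < k" "k < N"
  shows "transvection N i j (-a) * (transvection N j k (-b) * (transvection N i j a * transvection N j k b))
       = transvection N i k (a * b)"
proof -
  have "transvection N i j x = heis_block N i j k x 0 0" "transvection N j k y = heis_block N i j k 0 y 0"
    "transvection N i k z = heis_block N i j k 0 0 z" for x y z
    by (auto simp: heis_block_def transvection_def intro!: eq_matI)
  then show ?thesis
    using assms by (simp add: heis_block_mult)
qed

lemma UT_carrier: "A \<in> UT N \<Longrightarrow> A \<in> carrier_mat N N"
  by (simp add: UT_def)

lemma UT_diag: "A \<in> UT N \<Longrightarrow> i < N \<Longrightarrow> A $$ (i,i) = 1"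
  by (simp add: UT_def)

lemma UT_below_diag: "A \<in> UT N \<Longrightarrow> i < N \<Longrightarrow> j < i \<Longrightarrow> A $$ (i,j) = 0"
  by (simp add: UT_def)

lemma one_UT: "1\<^sub>m N \<in> UT N"
  by (simp add: UT_def)

lemma transvection_UT: "i < j \<Longrightarrow> j < N \<Longrightarrow> transvection N i j c \<in> UT N"
  by (auto simp: UT_def)

lemma UT_mult:
  assumes A: "A \<in> UT N" and B: "B \<in> UT N"
  shows "A * B \<in> UT N"
proof -
  have cA: "A \<in> carrier_mat N N" and cB: "B \<in> carrier_mat N N"
    using A B by (simp_all add: UT_carrier)
  have "(A * B) $$ (i,j) = (if i = j then 1 else 0)" if "i < N" "j \<le> i" for i j
  proof -
    have "(A * B) $$ (i,j) = (\<Sum>t<N. A $$ (i,t) * B $$ (t,j))"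
      using that by (intro index_mult_mat_sum[OF cA cB]) auto
    also have "\<dots> = (\<Sum>t<N. if t = i then (if i = j then 1 else 0) else 0)"
    proof (rule sum.cong)
      fix t assume t: "t \<in> {..<N}"
      consider "t < i" | "t = i" | "j < t" "t \<noteq> i"
        using \<open>j \<le> i\<close> by linarith
      then show "A $$ (i,t) * B $$ (t,j) = (if t = i then (if i = j then 1 else 0) else 0)"
      proof cases
        case 1
        then show ?thesis using UT_below_diag[OF A \<open>i < N\<close>] by simp
      next
        case 2
        then show ?thesis using UT_diag[OF A] UT_diag[OF B] UT_below_diag[OF B] that by auto
      next
        case 3
        then show ?thesis using UT_below_diag[OF B] t by simp
      qed
    qed simp
    also have "\<dots> = (if i = j then 1 else 0)"
      using that by simp
    finally show ?thesis .
  qed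
  then show ?thesis
    using cA cB by (auto simp: UT_def)
qed

definition cleared_before :: "nat \<Rightarrow> nat \<Rightarrow> nat \<Rightarrow> int mat \<Rightarrow> bool" where
  "cleared_before N j m A \<longleftrightarrow> (\<forall>r s. r < s \<and> s < N \<and> (s < j \<or> s = j \<and> r < m) \<longrightarrow> A $$ (r,s) = 0)"

lemma cleared_before_all:
  assumes "A \<in> UT N" "cleared_before N j m A" "N \<le> j"
  shows "A = 1\<^sub>m N"
proof (rule eq_matI)
  fix r s assume rs: "r < dim_row (1\<^sub>m N)" "s < dim_col (1\<^sub>m N)"
  consider "r < s" | "r = s" | "s < r" by linarith
  then show "A $$ (r,s) = 1\<^sub>m N $$ (r,s)"
  proof cases
    case 1
    with assms rs show ?thesis unfolding cleared_before_def by simp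
  next
    case 2
    with assms(1) rs show ?thesis by (simp add: UT_diag)
  next
    case 3
    with assms(1) rs show ?thesis by (simp add: UT_below_diag)
  qed
qed (use assms(1) in \<open>auto simp: UT_def\<close>)

lemma cleared_before_step:
  assumes A: "A \<in> UT N" and mj: "m < j" "j < N" and c: "cleared_before N j m A"
  shows "cleared_before N j (Suc m) (transvection N m j (- A $$ (m,j)) * A)"
  unfolding cleared_before_def
proof (intro allI impI)
  fix r s assume rs: "r < s \<and> s < N \<and> (s < j \<or> s = j \<and> r < Suc m)"
  have e: "(transvection N m j (- A $$ (m,j)) * A) $$ (r,s) = A $$ (r,s) + (if r = m then - A $$ (m,j) * A $$ (j,s) else 0)"
    using rs mj by (intro transvection_mult_index[OF UT_carrier[OF A]]) auto
  show "(transvection N m j (- A $$ (m,j)) * A) $$ (r,s) = 0"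
  proof (cases "r = m")
    case True
    show ?thesis
    proof (cases "s < j")
      case True
      then show ?thesis using e c rs UT_below_diag[OF A, of j s] mj \<open>r = m\<close> unfolding cleared_before_def by simp
    next
      case False
      then show ?thesis using e rs UT_diag[OF A, of j] mj \<open>r = m\<close> by simp
    qed
  next
    case False
    then show ?thesis using e c rs unfolding cleared_before_def by auto
  qed
qed

lemma cleared_before_next_column:
  assumes "cleared_before N j m A" "j \<le> m"
  shows "cleared_before N (Suc j) 0 A"
  unfolding cleared_before_def
proof (intro allI impI)
  fix r s assume "r < s \<and> s < N \<and> (s < Suc j \<or> s = Suc j \<and> r < 0)"
  then have "r < s \<and> s < N \<and> (s < j \<or> s = j \<and> r < m)"
    using assms(2) by auto
  then show "A $$ (r,s) = 0"
    using assms(1) unfolding cleared_before_def by blast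
qed

text \<open>Every \<open>A \<in> UT N\<close> is reduced to \<open>1\<close> by left multiplication with transvections,
  eliminating the entries above the diagonal column by column; the pair \<open>(j, m)\<close> of
  \<open>cleared_before\<close> decreases in the measure below.\<close>

lemma UT_induct [consumes 1, case_names one step]:
  assumes "A \<in> UT N"
    and one: "P (1\<^sub>m N)"
    and step: "\<And>A i j c. A \<in> UT N \<Longrightarrow> i < j \<Longrightarrow> j < N \<Longrightarrow> P (transvection N i j c * A) \<Longrightarrow> P A"
  shows "P A"
proof -
  have "P A" if "A \<in> UT N" "cleared_before N j m A" for A j m
    using that
  proof (induction "(N - j) * (N + 1) + (N - m)" arbitrary: j m A rule: less_induct)
    case less
    show ?case
    proof (cases "N \<le> j")
      case True
      then show ?thesis using cleared_before_all[OF less.prems] one by simp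
    next
      case False
      show ?thesis
      proof (cases "m < j")
        case True
        have "P (transvection N m j (- A $$ (m,j)) * A)"
          using less.hyps[of j "Suc m"] True False transvection_UT UT_mult
            cleared_before_step[OF less.prems(1) True _ less.prems(2)] less.prems(1) by simp
        then show ?thesis
          using step[OF less.prems(1), of m j] True False by simp
      next
        case False
        then have "cleared_before N (Suc j) 0 A"
          using cleared_before_next_column less.prems(2) by simp
        moreover have "(N - Suc j) * (N + 1) + (N - 0) < (N - j) * (N + 1) + (N - m)"
        proof -
          have "N - j = Suc (N - Suc j)" using \<open>\<not> N \<le> j\<close> by simp
          then show ?thesis by simp
        qed
        ultimately show ?thesis
          using less.hyps less.prems(1) by blast
      qed
    qed
  qed
  from this[of A 0 0] assms(1) show ?thesis
    by (simp add: cleared_before_def)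
qed

lemma UT_group_simps [simp]:
  "carrier (UT_group N) = UT N" "mult (UT_group N) = (*)" "one (UT_group N) = 1\<^sub>m N"
  by (simp_all add: UT_group_def)

lemma UT_left_one: "A \<in> UT N \<Longrightarrow> 1\<^sub>m N * A = A"
  using UT_carrier by (rule left_mult_one_mat)

lemma group_UT_group: "group (UT_group N)"
proof (rule groupI)
  fix A assume "A \<in> carrier (UT_group N)"
  then have "A \<in> UT N" by simp
  then have "\<exists>B \<in> UT N. B * A = 1\<^sub>m N"
  proof (induction rule: UT_induct)
    case one
    show ?case using one_UT by force
  next
    case (step A i j c)
    then obtain B where B: "B \<in> UT N" "B * (transvection N i j c * A) = 1\<^sub>m N" by auto
    have "(B * transvection N i j c) * A = 1\<^sub>m N"
      using B UT_carrier[OF step(1)] UT_carrier[OF B(1)] by (subst assoc_mult_mat[of _ N N _ N _ N]) auto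
    then show ?case using UT_mult[OF B(1) transvection_UT[OF step(2,3)]] by blast
  qed
  then show "\<exists>B\<in>carrier (UT_group N). B \<otimes>\<^bsub>UT_group N\<^esub> A = \<one>\<^bsub>UT_group N\<^esub>" by simp
qed (auto simp: UT_mult one_UT UT_carrier UT_left_one intro!: assoc_mult_mat[of _ N N _ N _ N])

lemma transvection_int_pow:
  assumes "i < j" "j < N"
  shows "transvection N i j c = transvection N i j 1 [^]\<^bsub>UT_group N\<^esub> c"
proof (rule group.additive_eq_int_pow[OF group_UT_group, of "transvection N i j"])
  show "transvection N i j a \<in> carrier (UT_group N)" for a
    using assms by (simp add: transvection_UT)
  show "transvection N i j (a + b) = transvection N i j a \<otimes>\<^bsub>UT_group N\<^esub> transvection N i j b" for a b
    using assms by (simp add: transvection_add)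
qed

lemma transvection_nat_pow:
  "i < j \<Longrightarrow> j < N \<Longrightarrow> transvection N i j (int k) = transvection N i j 1 [^]\<^bsub>UT_group N\<^esub> k"
  by (simp only: transvection_int_pow[of i j N "int k"] int_pow_int)

lemma transvection_inv:
  assumes "i < j" "j < N"
  shows "inv\<^bsub>UT_group N\<^esub> (transvection N i j a) = transvection N i j (- a)"
proof -
  interpret group "UT_group N" by (rule group_UT_group)
  have "transvection N i j (- a) \<otimes>\<^bsub>UT_group N\<^esub> transvection N i j a = \<one>\<^bsub>UT_group N\<^esub>"
    using assms by (simp add: transvection_add transvection_zero)
  then show ?thesis
    using assms by (intro inv_equality) (simp_all add: transvection_UT)
qed

definition transvections :: "nat \<Rightarrow> int mat set" where
  "transvections N = (\<lambda>(i,j). transvection N i j 1) ` {(i,j). i < j \<and> j < N}"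

lemma finite_transvections: "finite (transvections N)"
proof -
  have "finite {(i,j). i < j \<and> j < (N::nat)}"
    by (rule finite_subset[of _ "{..<N} \<times> {..<N}"]) auto
  then show ?thesis
    unfolding transvections_def by (rule finite_imageI)
qed

lemma transvections_subset_UT: "transvections N \<subseteq> UT N"
  unfolding transvections_def by (auto intro: transvection_UT)

lemma generate_transvections: "generate (UT_group N) (transvections N) = UT N"
proof -
  interpret group "UT_group N" by (rule group_UT_group)
  have sub: "transvections N \<subseteq> carrier (UT_group N)"
    using transvections_subset_UT by simp
  have "A \<in> generate (UT_group N) (transvections N)" if "A \<in> UT N" for A
    using that
  proof (induction rule: UT_induct)
    case one
    show ?case using generate.one[of "UT_group N"] by simp
  next
    case (step A i j c)
    have "transvection N i j 1 \<in> generate (UT_group N) (transvections N)"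
      using step(2,3) unfolding transvections_def by (intro generate.incl image_eqI[of _ _ "(i,j)"]) simp_all
    then have "transvection N i j (- c) \<in> generate (UT_group N) (transvections N)"
      unfolding transvection_int_pow[OF step(2,3), of "- c"]
      by (rule subgroup_int_pow_closed[OF generate_is_subgroup[OF sub]])
    then have "transvection N i j (- c) * (transvection N i j c * A) \<in> generate (UT_group N) (transvections N)"
      using generate.eng[OF _ step(4)] by simp
    moreover have "transvection N i j (- c) * (transvection N i j c * A)
        = (transvection N i j (- c) * transvection N i j c) * A"
      using UT_carrier[OF step(1)] by (intro assoc_mult_mat[symmetric, of _ N N _ N _ N]) auto
    moreover have "transvection N i j (- c) * transvection N i j c = 1\<^sub>m N"
      using step(2,3) by (simp add: transvection_add transvection_zero)
    ultimately show ?case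
      using UT_left_one[OF step(1)] by simp
  qed
  then show ?thesis
    using generate_incl[OF sub] by auto
qed


section \<open>The Heisenberg group\<close>

lemma heis_simps [simp]:
  "carrier (heis n) = heis_carrier n" "mult (heis n) = heis_mult n" "one (heis n) = (\<lambda>_. 0)"
  by (simp_all add: heis_def)

lemma heis_mult_top:
  "heis_mult n a b (2*n+1) = a (2*n+1) + b (2*n+1) - (\<Sum>k=1..n. a (n+k) * b k)"
  by (simp add: heis_mult_def)

lemma heis_mult_closed: "heis_mult n a b \<in> heis_carrier n"
  by (auto simp: heis_carrier_def heis_mult_def)

lemma heis_mult_assoc: "heis_mult n (heis_mult n a b) c = heis_mult n a (heis_mult n b c)"
proof
  fix i
  show "heis_mult n (heis_mult n a b) c i = heis_mult n a (heis_mult n b c) i"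
  proof (cases "i = 2*n+1")
    case True
    have s1: "(\<Sum>k=1..n. heis_mult n a b (n+k) * c k) = (\<Sum>k=1..n. (a (n+k) + b (n+k)) * c k)"
      and s2: "(\<Sum>k=1..n. a (n+k) * heis_mult n b c k) = (\<Sum>k=1..n. a (n+k) * (b k + c k))"
      by (auto simp: heis_mult_def intro!: sum.cong)
    have "heis_mult n (heis_mult n a b) c (2*n+1)
        = a (2*n+1) + b (2*n+1) - (\<Sum>k=1..n. a (n+k) * b k) + c (2*n+1) - (\<Sum>k=1..n. (a (n+k) + b (n+k)) * c k)"
      by (simp only: heis_mult_top s1)
    also have "\<dots> = a (2*n+1) + (b (2*n+1) + c (2*n+1) - (\<Sum>k=1..n. b (n+k) * c k))
                    - (\<Sum>k=1..n. a (n+k) * (b k + c k))"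
      by (simp add: algebra_simps sum.distrib)
    also have "\<dots> = heis_mult n a (heis_mult n b c) (2*n+1)"
      by (simp only: heis_mult_top s2)
    finally show ?thesis using True by simp
  qed (auto simp: heis_mult_def)
qed

definition heis_inverse :: "nat \<Rightarrow> (nat \<Rightarrow> int) \<Rightarrow> (nat \<Rightarrow> int)" where
  "heis_inverse n g = (\<lambda>i. if 1 \<le> i \<and> i \<le> 2*n then - g i
       else if i = 2*n+1 then - g i - (\<Sum>k=1..n. g (n+k) * g k) else 0)"

lemma heis_inverse_closed: "heis_inverse n g \<in> heis_carrier n"
  by (auto simp: heis_carrier_def heis_inverse_def)

lemma heis_inverse_mult: "heis_mult n (heis_inverse n g) g = (\<lambda>_. 0)"
proof
  fix i
  show "heis_mult n (heis_inverse n g) g i = 0"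
  proof (cases "i = 2*n+1")
    case True
    have s: "(\<Sum>k=1..n. heis_inverse n g (n+k) * g k) = (\<Sum>k=1..n. - g (n+k) * g k)"
      by (auto simp: heis_inverse_def intro!: sum.cong)
    have t: "heis_inverse n g (2*n+1) = - g (2*n+1) - (\<Sum>k=1..n. g (n+k) * g k)"
      by (simp add: heis_inverse_def)
    have "heis_mult n (heis_inverse n g) g (2*n+1)
        = - g (2*n+1) - (\<Sum>k=1..n. g (n+k) * g k) + g (2*n+1) - (\<Sum>k=1..n. - g (n+k) * g k)"
      by (simp only: heis_mult_top s t)
    also have "\<dots> = 0" by (simp add: sum_negf)
    finally show ?thesis using True by simp
  qed (auto simp: heis_mult_def heis_inverse_def)
qed

lemma heis_zero_mult: "g \<in> heis_carrier n \<Longrightarrow> heis_mult n (\<lambda>_. 0) g = g"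
proof
  fix i assume "g \<in> heis_carrier n"
  then show "heis_mult n (\<lambda>_. 0) g i = g i"
    by (cases "i = 0 \<or> i > 2*n+1") (auto simp: heis_carrier_def heis_mult_def)
qed

lemma group_heis: "group (heis n)"
proof (rule groupI)
  fix g assume "g \<in> carrier (heis n)"
  show "\<exists>h\<in>carrier (heis n). h \<otimes>\<^bsub>heis n\<^esub> g = \<one>\<^bsub>heis n\<^esub>"
    by (intro bexI[of _ "heis_inverse n g"]) (simp_all add: heis_inverse_mult heis_inverse_closed)
qed (simp_all add: heis_mult_assoc heis_mult_closed heis_zero_mult, simp add: heis_carrier_def)

lemma heis_inv_eq: "g \<in> heis_carrier n \<Longrightarrow> inv\<^bsub>heis n\<^esub> g = heis_inverse n g"
  using group.inv_equality[OF group_heis] heis_inverse_mult heis_inverse_closed by fastforce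

definition heis_unit :: "nat \<Rightarrow> int \<Rightarrow> nat \<Rightarrow> int" where
  "heis_unit i c = (\<lambda>j. if j = i then c else 0)"

lemma heis_unit_carrier: "1 \<le> i \<Longrightarrow> i \<le> 2*n+1 \<Longrightarrow> heis_unit i c \<in> heis_carrier n"
  by (auto simp: heis_unit_def heis_carrier_def)

lemma heis_unit_add:
  "1 \<le> i \<Longrightarrow> i \<le> 2*n+1 \<Longrightarrow> heis_mult n (heis_unit i a) (heis_unit i b) = heis_unit i (a + b)"
  by (rule ext) (auto simp: heis_mult_def heis_unit_def intro!: sum.neutral)

definition heis_unit_gens :: "nat \<Rightarrow> (nat \<Rightarrow> int) set" where
  "heis_unit_gens n = (\<lambda>i. heis_unit i 1) ` {1..2*n+1}"

lemma heis_unit_gens_subset: "heis_unit_gens n \<subseteq> heis_carrier n"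
  by (auto simp: heis_unit_gens_def heis_unit_carrier)

lemma heis_unit_in_generate:
  assumes "1 \<le> i" "i \<le> 2*n+1"
  shows "heis_unit i c \<in> generate (heis n) (heis_unit_gens n)"
proof -
  interpret group "heis n" by (rule group_heis)
  have "heis_unit i c = heis_unit i 1 [^]\<^bsub>heis n\<^esub> c"
  proof (rule additive_eq_int_pow[of "heis_unit i"])
    show "heis_unit i a \<in> carrier (heis n)" for a
      using assms by (simp add: heis_unit_carrier)
    show "heis_unit i (a + b) = heis_unit i a \<otimes>\<^bsub>heis n\<^esub> heis_unit i b" for a b
      using assms by (simp add: heis_unit_add)
  qed
  moreover have "heis_unit i 1 \<in> generate (heis n) (heis_unit_gens n)"
    using assms by (intro generate.incl) (auto simp: heis_unit_gens_def)
  ultimately show ?thesis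
    using subgroup_int_pow_closed[OF generate_is_subgroup] heis_unit_gens_subset by simp
qed

lemma heis_in_generate_if_zero_above:
  assumes "g \<in> heis_carrier n" "\<forall>i. m < i \<and> i \<le> 2*n \<longrightarrow> g i = 0"
  shows "g \<in> generate (heis n) (heis_unit_gens n)"
  using assms
proof (induction m arbitrary: g)
  case 0
  have "g = heis_unit (2*n+1) (g (2*n+1))"
  proof
    fix i
    show "g i = heis_unit (2*n+1) (g (2*n+1)) i"
      using 0 by (cases "i = 0 \<or> i > 2*n+1") (auto simp: heis_unit_def heis_carrier_def)
  qed
  then show ?case
    using heis_unit_in_generate[of "2*n+1" n] by (metis le_add2 le_refl)
next
  case (Suc m)
  interpret group "heis n" by (rule group_heis)
  show ?case
  proof (cases "Suc m \<le> 2*n")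
    case True
    let ?u = "heis_unit (Suc m)"
    let ?g = "heis_mult n (?u (- g (Suc m))) g"
    have "?g \<in> generate (heis n) (heis_unit_gens n)"
      using Suc.prems(2) by (intro Suc.IH heis_mult_closed) (auto simp: heis_mult_def heis_unit_def)
    then have "heis_mult n (?u (g (Suc m))) ?g \<in> generate (heis n) (heis_unit_gens n)"
      using generate.eng[OF heis_unit_in_generate] True by fastforce
    moreover have "heis_mult n (?u (g (Suc m))) ?g = heis_mult n (?u 0) g"
      using True by (simp only: heis_mult_assoc[symmetric] heis_unit_add) simp
    moreover have "heis_mult n (?u 0) g = g"
      using Suc.prems(1) l_one[of g] by (simp add: heis_unit_def[abs_def])
    ultimately show ?thesis by simp
  qed (use Suc in auto)
qed

lemma generate_heis_unit_gens: "generate (heis n) (heis_unit_gens n) = heis_carrier n"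
proof
  interpret group "heis n" by (rule group_heis)
  show "generate (heis n) (heis_unit_gens n) \<subseteq> heis_carrier n"
    using generate_incl heis_unit_gens_subset by simp
  show "heis_carrier n \<subseteq> generate (heis n) (heis_unit_gens n)"
    using heis_in_generate_if_zero_above[of _ n "2*n"] by auto
qed

lemma abs_sum_mult_le:
  fixes f g :: "'a \<Rightarrow> 'b::linordered_idom"
  assumes "\<And>k. k \<in> I \<Longrightarrow> \<bar>f k\<bar> \<le> A" "\<And>k. k \<in> I \<Longrightarrow> \<bar>g k\<bar> \<le> B"
  shows "\<bar>\<Sum>k\<in>I. f k * g k\<bar> \<le> of_nat (card I) * (A * B)"
proof -
  have "\<bar>\<Sum>k\<in>I. f k * g k\<bar> \<le> (\<Sum>k\<in>I. \<bar>f k\<bar> * \<bar>g k\<bar>)"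
    unfolding abs_mult[symmetric] by (rule sum_abs)
  also have "\<dots> \<le> (\<Sum>k\<in>I. A * B)"
  proof (rule sum_mono)
    fix k assume "k \<in> I"
    then show "\<bar>f k\<bar> * \<bar>g k\<bar> \<le> A * B"
      using assms order_trans[OF abs_ge_zero assms(1)] by (intro mult_mono) simp_all
  qed
  finally show ?thesis
    by simp
qed

lemma heis_foldr_bound:
  fixes M :: int
  assumes "\<forall>g\<in>set gs. \<forall>i. \<bar>g i\<bar> \<le> M"
  shows "(\<forall>i. 1 \<le> i \<and> i \<le> 2*n \<longrightarrow> \<bar>foldr (heis_mult n) gs (\<lambda>_. 0) i\<bar> \<le> int (length gs) * M)
       \<and> \<bar>foldr (heis_mult n) gs (\<lambda>_. 0) (2*n+1)\<bar> \<le> int (length gs) * M + int n * M^2 * int (length gs)^2"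
  using assms
proof (induction gs)
  case (Cons g gs)
  let ?P = "foldr (heis_mult n) gs (\<lambda>_. 0)"
  let ?L = "int (length gs)"
  have gM: "\<And>i. \<bar>g i\<bar> \<le> M"
    using Cons.prems by simp
  have IH: "\<And>i. 1 \<le> i \<Longrightarrow> i \<le> 2*n \<Longrightarrow> \<bar>?P i\<bar> \<le> ?L * M" "\<bar>?P (2*n+1)\<bar> \<le> ?L * M + int n * M^2 * ?L^2"
    using Cons by auto
  have low: "\<bar>heis_mult n g ?P i\<bar> \<le> (?L + 1) * M" if "1 \<le> i" "i \<le> 2*n" for i
    using that gM[of i] IH(1)[OF that] abs_triangle_ineq[of "g i" "?P i"]
    by (simp add: heis_mult_def algebra_simps)
  have "\<bar>\<Sum>k=1..n. g (n+k) * ?P k\<bar> \<le> int n * (M * (?L * M))"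
    using abs_sum_mult_le[of "{1..n}" "\<lambda>k. g (n+k)" M ?P "?L * M"] gM IH(1) by simp
  then have "\<bar>heis_mult n g ?P (2*n+1)\<bar> \<le> M + (?L * M + int n * M^2 * ?L^2) + int n * M^2 * ?L"
    using gM[of "2*n+1"] IH(2) unfolding heis_mult_top by (simp add: power2_eq_square algebra_simps)
  also have "\<dots> \<le> (?L + 1) * M + int n * M^2 * (?L + 1)^2"
    using gM[of 0] by (simp add: power2_eq_square algebra_simps)
  finally show ?case
    using low by (simp add: add.commute)
qed simp


section \<open>The matrices of the Nickel representation\<close>

text \<open>Row \<open>b\<close> lists the coordinates of \<open>(basis b)\<^sup>g\<close>: for \<open>i \<le> 2n\<close> one computes
  \<open>t\<^sub>i\<^sup>g = t\<^sub>i - g\<^sub>i\<close>, next \<open>t\<^sub>2\<^sub>n\<^sub>+\<^sub>1\<^sup>g = t\<^sub>2\<^sub>n\<^sub>+\<^sub>1 + \<Sum>\<^sub>k g\<^sub>k t\<^sub>n\<^sub>+\<^sub>k - g\<^sub>2\<^sub>n\<^sub>+\<^sub>1 - \<Sum>\<^sub>k g\<^sub>n\<^sub>+\<^sub>k g\<^sub>k\<close>,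
  and \<open>1\<^sup>g = 1\<close>.\<close>

definition nickel_coeff :: "nat \<Rightarrow> (nat \<Rightarrow> int) \<Rightarrow> nat \<Rightarrow> nat \<Rightarrow> int" where
  "nickel_coeff n g b b' = (if b = b' then 1 else 0)
     + (if b < 2*n \<and> b' = 2*n+1 then - g (b+1) else 0)
     + (if b = 2*n \<and> n \<le> b' \<and> b' < 2*n then g (b'+1-n) else 0)
     + (if b = 2*n \<and> b' = 2*n+1 then - g (2*n+1) - (\<Sum>k=1..n. g (n+k) * g k) else 0)"

definition nickel_matrix :: "nat \<Rightarrow> (nat \<Rightarrow> nat) \<Rightarrow> (nat \<Rightarrow> int) \<Rightarrow> int mat" where
  "nickel_matrix n \<sigma> g = mat (2*n+2) (2*n+2) (\<lambda>(p,q). nickel_coeff n g (\<sigma> p) (\<sigma> q))"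

lemma index_nickel_matrix [simp]:
  "p < 2*n+2 \<Longrightarrow> q < 2*n+2 \<Longrightarrow> nickel_matrix n \<sigma> g $$ (p,q) = nickel_coeff n g (\<sigma> p) (\<sigma> q)"
  by (simp add: nickel_matrix_def)

lemma nickel_matrix_carrier [simp]: "nickel_matrix n \<sigma> g \<in> carrier_mat (2*n+2) (2*n+2)"
  by (simp add: nickel_matrix_def)

lemma nickel_basis_low: "b \<le> 2*n \<Longrightarrow> nickel_basis n b h = of_int (h (b+1))"
  by (simp add: nickel_basis_def)

lemma nickel_basis_top: "nickel_basis n (2*n+1) h = 1" "nickel_basis n (Suc (2*n)) h = 1"
  by (simp_all add: nickel_basis_def)

lemma sum_if_eq_mult:
  fixes F :: "nat \<Rightarrow> 'a::comm_ring_1"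
  assumes "a < M"
  shows "(\<Sum>b<M. (if b = a then x else 0) * F b) = x * F a"
proof -
  have "\<And>b. (if b = a then x else 0) * F b = (if b = a then x * F a else 0)" by simp
  then show ?thesis using assms by simp
qed

lemma sum_middle_reindex:
  fixes F :: "nat \<Rightarrow> 'a::comm_ring_1"
  shows "(\<Sum>b<2*n+2. (if n \<le> b \<and> b < 2*n then F b else 0)) = (\<Sum>k=1..n. F (n+k-1))"
proof -
  have "(\<Sum>b<2*n+2. (if n \<le> b \<and> b < 2*n then F b else 0)) = (\<Sum>b\<in>{n..<2*n}. F b)"
    by (subst sum.inter_filter[symmetric]) (auto intro!: sum.cong)
  also have "\<dots> = (\<Sum>k=1..n. F (n+k-1))"
    by (rule sum.reindex_bij_witness[of _ "\<lambda>k. n+k-1" "\<lambda>b. b+1-n"]) auto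
  finally show ?thesis .
qed

lemma nickel_expansion_low:
  assumes b0: "b0 < 2*n"
  shows "(\<Sum>b<2*n+2. of_int (nickel_coeff n g b0 b) * nickel_basis n b h)
       = nickel_basis n b0 (heis_mult n h (heis_inverse n g))"
proof -
  have pw: "of_int (nickel_coeff n g b0 b) * nickel_basis n b h
      = (if b = b0 then 1 else 0) * nickel_basis n b h
        + (if b = 2*n+1 then of_int (- g (b0+1)) else 0) * nickel_basis n b h" for b
    using b0 by (cases "b = b0"; cases "b = 2*n+1") (auto simp: nickel_coeff_def)
  have "(\<Sum>b<2*n+2. of_int (nickel_coeff n g b0 b) * nickel_basis n b h)
      = (\<Sum>b<2*n+2. (if b = b0 then 1 else 0) * nickel_basis n b h)
        + (\<Sum>b<2*n+2. (if b = 2*n+1 then of_int (- g (b0+1)) else 0) * nickel_basis n b h)"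
    unfolding pw by (rule sum.distrib)
  also have "\<dots> = nickel_basis n b0 h + of_int (- g (b0+1))"
    using b0 by (subst (1 2) sum_if_eq_mult) (simp_all add: nickel_basis_top)
  also have "\<dots> = nickel_basis n b0 (heis_mult n h (heis_inverse n g))"
    using b0 by (simp add: nickel_basis_low heis_mult_def heis_inverse_def)
  finally show ?thesis .
qed

lemma nickel_expansion_center:
  "(\<Sum>b<2*n+2. of_int (nickel_coeff n g (2*n) b) * nickel_basis n b h)
   = nickel_basis n (2*n) (heis_mult n h (heis_inverse n g))"
proof -
  define X where "X = - g (2*n+1) - (\<Sum>k=1..n. g (n+k) * g k)"
  have pw: "of_int (nickel_coeff n g (2*n) b) * nickel_basis n b h
      = (if b = 2*n then 1 else 0) * nickel_basis n b h
        + (if n \<le> b \<and> b < 2*n then of_int (g (b+1-n)) * nickel_basis n b h else 0)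
        + (if b = 2*n+1 then of_int X else 0) * nickel_basis n b h" for b
    by (cases "b = 2*n"; cases "n \<le> b \<and> b < 2*n"; cases "b = 2*n+1") (auto simp: nickel_coeff_def X_def)
  have t1: "(\<Sum>b<2*n+2. (if b = 2*n then 1 else 0) * nickel_basis n b h) = of_int (h (2*n+1))"
    by (subst sum_if_eq_mult) (auto simp: nickel_basis_low)
  have t2: "(\<Sum>b<2*n+2. (if n \<le> b \<and> b < 2*n then of_int (g (b+1-n)) * nickel_basis n b h else 0))
      = (\<Sum>k=1..n. of_int (g k) * of_int (h (n+k)))"
    unfolding sum_middle_reindex by (rule sum.cong) (auto simp: nickel_basis_low)
  have t3: "(\<Sum>b<2*n+2. (if b = 2*n+1 then of_int X else 0) * nickel_basis n b h) = of_int X"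
    by (subst sum_if_eq_mult) (auto simp: nickel_basis_top)
  have "(\<Sum>b<2*n+2. of_int (nickel_coeff n g (2*n) b) * nickel_basis n b h)
      = of_int (h (2*n+1)) + (\<Sum>k=1..n. of_int (g k) * of_int (h (n+k))) + of_int X"
    unfolding pw sum.distrib t1 t2 t3 ..
  also have "\<dots> = of_int (h (2*n+1) + (\<Sum>k=1..n. g k * h (n+k)) + X)"
    by simp
  also have "h (2*n+1) + (\<Sum>k=1..n. g k * h (n+k)) + X = heis_mult n h (heis_inverse n g) (2*n+1)"
  proof -
    have s: "(\<Sum>k=1..n. h (n+k) * heis_inverse n g k) = (\<Sum>k=1..n. - (g k * h (n+k)))"
      by (rule sum.cong) (auto simp: heis_inverse_def)
    have t: "heis_inverse n g (2*n+1) = X"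
      by (simp add: heis_inverse_def X_def)
    show ?thesis
      by (simp only: heis_mult_top s t) (simp add: sum_negf)
  qed
  finally show ?thesis
    by (simp add: nickel_basis_low)
qed

lemma nickel_expansion_const:
  "(\<Sum>b<2*n+2. of_int (nickel_coeff n g (2*n+1) b) * nickel_basis n b h)
   = nickel_basis n (2*n+1) (heis_mult n h (heis_inverse n g))"
proof -
  have pw: "of_int (nickel_coeff n g (2*n+1) b) * nickel_basis n b h
      = (if b = 2*n+1 then 1 else 0) * nickel_basis n b h" for b
    by (auto simp: nickel_coeff_def)
  show ?thesis
    unfolding pw by (subst sum_if_eq_mult) (simp_all add: nickel_basis_top)
qed

lemma dual_act_nickel_basis:
  assumes "g \<in> heis_carrier n" "b0 < 2*n+2"
  shows "dual_act n g (nickel_basis n b0) h = (\<Sum>b<2*n+2. of_int (nickel_coeff n g b0 b) * nickel_basis n b h)"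
proof -
  consider "b0 < 2*n" | "b0 = 2*n" | "b0 = 2*n+1"
    using assms(2) by linarith
  then show ?thesis
    using assms(1) nickel_expansion_low[of b0 n g h] nickel_expansion_center[of n g h] nickel_expansion_const[of n g h]
    by cases (simp_all add: dual_act_def heis_inv_eq)
qed

text \<open>Evaluate at \<open>1\<close> and at the generators \<open>x\<^sub>b\<^sub>+\<^sub>1\<close>.\<close>

lemma nickel_basis_independent:
  fixes c :: "nat \<Rightarrow> rat"
  assumes zero: "\<forall>h\<in>heis_carrier n. (\<Sum>b<2*n+2. c b * nickel_basis n b h) = 0" and b: "b < 2*n+2"
  shows "c b = 0"
proof -
  have "(\<Sum>b<2*n+2. c b * nickel_basis n b (\<lambda>_. 0)) = (\<Sum>b<2*n+2. (if b = 2*n+1 then 1 else 0) * c b)"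
    by (rule sum.cong) (auto simp: nickel_basis_def)
  also have "\<dots> = c (2*n+1)"
    by (subst sum_if_eq_mult) auto
  finally have top: "c (2*n+1) = 0"
    using zero by (auto simp: heis_carrier_def)
  show ?thesis
  proof (cases "b = 2*n+1")
    case False
    then have b': "b \<le> 2*n" using b by simp
    have "(\<Sum>b'<2*n+2. c b' * nickel_basis n b' (heis_unit (b+1) 1))
        = (\<Sum>b'<2*n+2. (if b' = b then 1 else 0) * c b' + (if b' = 2*n+1 then 1 else 0) * c b')"
      using b' by (intro sum.cong) (auto simp: nickel_basis_def heis_unit_def)
    also have "\<dots> = c b + c (2*n+1)"
      using b by (simp only: sum.distrib sum_if_eq_mult)
    finally have "c b + c (2*n+1) = 0"
      using zero heis_unit_carrier[of "b+1" n 1] b' by auto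
    with top show ?thesis by simp
  qed (use top in simp)
qed

definition represents :: "nat \<Rightarrow> (nat \<Rightarrow> nat) \<Rightarrow> (nat \<Rightarrow> int) \<Rightarrow> int mat \<Rightarrow> bool" where
  "represents n \<sigma> g A \<longleftrightarrow> A \<in> carrier_mat (2*n+2) (2*n+2) \<and>
      (\<forall>p < 2*n+2. \<forall>h \<in> heis_carrier n.
         dual_act n g (nickel_basis n (\<sigma> p)) h
           = (\<Sum>q < 2*n+2. of_int (A $$ (p,q)) * nickel_basis n (\<sigma> q) h))"

lemma represents_unique:
  assumes bij: "bij_betw \<sigma> {..<2*n+2} {..<2*n+2}" and A: "represents n \<sigma> g A" and B: "represents n \<sigma> g B"
  shows "A = B"
proof (rule eq_matI)
  let ?M = "2*n+2"
  let ?s = "inv_into {..<?M} \<sigma>"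
  have s\<sigma>: "?s (\<sigma> q) = q" if "q < ?M" for q
    using bij that bij_betw_inv_into_left by fastforce
  fix p q assume "p < dim_row B" "q < dim_col B"
  then have pq: "p < ?M" "q < ?M" using B by (auto simp: represents_def)
  define c where "c b = of_int (A $$ (p, ?s b)) - (of_int (B $$ (p, ?s b)) :: rat)" for b
  have "\<forall>h\<in>heis_carrier n. (\<Sum>b<?M. c b * nickel_basis n b h) = 0"
  proof
    fix h assume h: "h \<in> heis_carrier n"
    have "(\<Sum>b<?M. c b * nickel_basis n b h) = (\<Sum>q<?M. c (\<sigma> q) * nickel_basis n (\<sigma> q) h)"
      using sum.reindex_bij_betw[OF bij, of "\<lambda>b. c b * nickel_basis n b h"] by simp
    also have "\<dots> = (\<Sum>q<?M. of_int (A $$ (p,q)) * nickel_basis n (\<sigma> q) h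
                              - of_int (B $$ (p,q)) * nickel_basis n (\<sigma> q) h)"
    proof (rule sum.cong)
      fix q assume "q \<in> {..<?M}"
      then have "?s (\<sigma> q) = q" by (intro s\<sigma>) simp
      then show "c (\<sigma> q) * nickel_basis n (\<sigma> q) h = of_int (A $$ (p,q)) * nickel_basis n (\<sigma> q) h
                   - of_int (B $$ (p,q)) * nickel_basis n (\<sigma> q) h"
        by (simp add: c_def left_diff_distrib)
    qed simp
    also have "\<dots> = (\<Sum>q<?M. of_int (A $$ (p,q)) * nickel_basis n (\<sigma> q) h)
                    - (\<Sum>q<?M. of_int (B $$ (p,q)) * nickel_basis n (\<sigma> q) h)"
      by (rule sum_subtractf)
    also have "\<dots> = 0"
      using A B pq h unfolding represents_def by auto
    finally show "(\<Sum>b<?M. c b * nickel_basis n b h) = 0" .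
  qed
  then have "c (\<sigma> q) = 0"
    using nickel_basis_independent[of n c "\<sigma> q"] bij pq by (auto simp: bij_betw_def)
  then show "A $$ (p,q) = B $$ (p,q)"
    unfolding c_def s\<sigma>[OF pq(2)] by simp
qed (use A B in \<open>auto simp: represents_def\<close>)

lemma represents_nickel_matrix:
  assumes bij: "bij_betw \<sigma> {..<2*n+2} {..<2*n+2}" and g: "g \<in> heis_carrier n"
  shows "represents n \<sigma> g (nickel_matrix n \<sigma> g)"
  unfolding represents_def
proof (intro conjI allI impI ballI)
  fix p h assume p: "p < 2*n+2" and h: "h \<in> heis_carrier n"
  have "\<sigma> p < 2*n+2" using bij p by (auto simp: bij_betw_def)
  then have "dual_act n g (nickel_basis n (\<sigma> p)) h = (\<Sum>b<2*n+2. of_int (nickel_coeff n g (\<sigma> p) b) * nickel_basis n b h)"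
    by (rule dual_act_nickel_basis[OF g])
  also have "\<dots> = (\<Sum>q<2*n+2. of_int (nickel_coeff n g (\<sigma> p) (\<sigma> q)) * nickel_basis n (\<sigma> q) h)"
    using sum.reindex_bij_betw[OF bij, of "\<lambda>b. of_int (nickel_coeff n g (\<sigma> p) b) * nickel_basis n b h"] by simp
  finally show "dual_act n g (nickel_basis n (\<sigma> p)) h
      = (\<Sum>q<2*n+2. of_int (nickel_matrix n \<sigma> g $$ (p,q)) * nickel_basis n (\<sigma> q) h)"
    using p by simp
qed (rule nickel_matrix_carrier)

lemma nickel_rep_eq_matrix:
  assumes "bij_betw \<sigma> {..<2*n+2} {..<2*n+2}" "g \<in> heis_carrier n"
  shows "nickel_rep n \<sigma> g = nickel_matrix n \<sigma> g"
proof -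
  have "nickel_rep n \<sigma> g = (THE A. represents n \<sigma> g A)"
    unfolding nickel_rep_def represents_def ..
  also have "\<dots> = nickel_matrix n \<sigma> g"
    using represents_nickel_matrix[OF assms] represents_unique[OF assms(1) _ represents_nickel_matrix[OF assms]]
    by (rule the_equality)
  finally show ?thesis .
qed

text \<open>The action \<open>f \<mapsto> f\<^sup>g\<close> is a right action, so the matrices multiply in the order of the
  group elements.\<close>

lemma represents_mult:
  assumes A: "represents n \<sigma> g A" and B: "represents n \<sigma> g' B"
    and g: "g \<in> heis_carrier n" and g': "g' \<in> heis_carrier n"
  shows "represents n \<sigma> (heis_mult n g g') (A * B)"
  unfolding represents_def
proof (intro conjI allI impI ballI)
  interpret group "heis n" by (rule group_heis)
  let ?M = "2*n+2"
  have cA: "A \<in> carrier_mat ?M ?M" and cB: "B \<in> carrier_mat ?M ?M"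
    using A B by (simp_all add: represents_def)
  then show "A * B \<in> carrier_mat ?M ?M" by simp
  fix p h assume p: "p < ?M" and h: "h \<in> heis_carrier n"
  let ?h' = "heis_mult n h (inv\<^bsub>heis n\<^esub> g')"
  have "?h' \<in> heis_carrier n" by (rule heis_mult_closed)
  have "dual_act n (heis_mult n g g') (nickel_basis n (\<sigma> p)) h = dual_act n g (nickel_basis n (\<sigma> p)) ?h'"
    using g g' h inv_mult_group[of g g'] by (simp add: dual_act_def heis_mult_assoc)
  also have "\<dots> = (\<Sum>q<?M. of_int (A $$ (p,q)) * dual_act n g' (nickel_basis n (\<sigma> q)) h)"
    using A p \<open>?h' \<in> heis_carrier n\<close> unfolding represents_def by (simp add: dual_act_def)
  also have "\<dots> = (\<Sum>q<?M. of_int (A $$ (p,q)) * (\<Sum>r<?M. of_int (B $$ (q,r)) * nickel_basis n (\<sigma> r) h))"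
    using B h unfolding represents_def by (intro sum.cong) auto
  also have "\<dots> = (\<Sum>r<?M. (\<Sum>q<?M. of_int (A $$ (p,q)) * of_int (B $$ (q,r))) * nickel_basis n (\<sigma> r) h)"
    by (simp only: sum_distrib_left sum_distrib_right mult.assoc) (rule sum.swap)
  also have "\<dots> = (\<Sum>r<?M. of_int ((A * B) $$ (p,r)) * nickel_basis n (\<sigma> r) h)"
  proof (rule sum.cong[OF refl])
    fix r assume "r \<in> {..<?M}"
    then have "(A * B) $$ (p,r) = (\<Sum>q<?M. A $$ (p,q) * B $$ (q,r))"
      using p by (intro index_mult_mat_sum[OF cA cB]) auto
    then show "(\<Sum>q<?M. of_int (A $$ (p,q)) * of_int (B $$ (q,r))) * nickel_basis n (\<sigma> r) h
             = of_int ((A * B) $$ (p,r)) * nickel_basis n (\<sigma> r) h"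
      by simp
  qed
  finally show "dual_act n (heis_mult n g g') (nickel_basis n (\<sigma> p)) h
      = (\<Sum>r<?M. of_int ((A * B) $$ (p,r)) * nickel_basis n (\<sigma> r) h)" .
qed

lemma nickel_matrix_mult:
  assumes bij: "bij_betw \<sigma> {..<2*n+2} {..<2*n+2}" and "g \<in> heis_carrier n" "g' \<in> heis_carrier n"
  shows "nickel_matrix n \<sigma> (heis_mult n g g') = nickel_matrix n \<sigma> g * nickel_matrix n \<sigma> g'"
proof (rule represents_unique[OF bij represents_nickel_matrix[OF bij heis_mult_closed]])
  show "represents n \<sigma> (heis_mult n g g') (nickel_matrix n \<sigma> g * nickel_matrix n \<sigma> g')"
    using assms by (intro represents_mult represents_nickel_matrix)
qed


section \<open>Distortion of the center\<close>

lemma cubic_not_bounded_by_linear_quadratic: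
  fixes k :: "nat \<Rightarrow> nat" and E M c :: real
  assumes cube: "\<And>a. real a ^ 3 \<le> k a * M + c * (k a)^2" and linear: "\<And>a. k a \<le> E * a"
    and M: "M \<ge> 0" and c: "c \<ge> 0"
  shows False
proof -
  define a where "a = nat \<lceil>\<bar>E * M\<bar> + \<bar>c * E^2\<bar>\<rceil> + 1"
  have a: "\<bar>E * M\<bar> + \<bar>c * E^2\<bar> < real a" "1 \<le> real a"
    unfolding a_def by linarith+
  then have a_sq: "real a \<le> real a ^ 2"
    by (simp add: power2_eq_square)
  have "real a ^ 3 \<le> k a * M + c * (k a)^2"
    by (rule cube)
  also have "\<dots> \<le> (E * a) * M + c * (E * a)^2"
    using linear[of a] M c by (intro add_mono mult_right_mono mult_left_mono power_mono) simp_all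
  also have "\<dots> = (E * M) * a + (c * E^2) * a^2"
    by (simp add: power_mult_distrib algebra_simps)
  also have "\<dots> \<le> \<bar>E * M\<bar> * a^2 + \<bar>c * E^2\<bar> * a^2"
  proof (rule add_mono)
    have "(E * M) * a \<le> \<bar>E * M\<bar> * a"
      by (intro mult_right_mono) simp_all
    also have "\<dots> \<le> \<bar>E * M\<bar> * a^2"
      using a_sq by (intro mult_left_mono) simp_all
    finally show "(E * M) * a \<le> \<bar>E * M\<bar> * a^2" .
    show "(c * E^2) * a^2 \<le> \<bar>c * E^2\<bar> * a^2"
      by (intro mult_right_mono) simp_all
  qed
  also have "\<dots> < a * a^2"
    using a by (simp add: distrib_right[symmetric])
  finally show False
    by (simp add: power3_eq_cube power2_eq_square)
qed

lemma word_length_transvection_commutator: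
  assumes "x < y" "y < z" "z < N" and T: "T \<subseteq> UT N" "generate (UT_group N) T = UT N"
  shows "word_length (UT_group N) T (transvection N x z (c * d))
       \<le> 2 * (word_length (UT_group N) T (transvection N x y c) + word_length (UT_group N) T (transvection N y z d))"
proof -
  interpret group "UT_group N" by (rule group_UT_group)
  have "transvection N x z (c * d) = inv\<^bsub>UT_group N\<^esub> (transvection N x y c) \<otimes>\<^bsub>UT_group N\<^esub>
      (inv\<^bsub>UT_group N\<^esub> (transvection N y z d) \<otimes>\<^bsub>UT_group N\<^esub> (transvection N x y c \<otimes>\<^bsub>UT_group N\<^esub> transvection N y z d))"
    using transvection_commutator[OF assms(1-3), of c d] transvection_inv assms(1-3) by simp
  moreover have "transvection N x y c \<in> generate (UT_group N) T" "transvection N y z d \<in> generate (UT_group N) T"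
    using T(2) transvection_UT assms(1-3) by simp_all
  ultimately show ?thesis
    using word_length_commutator[of T] T(1) by simp
qed

text \<open>In \<open>UT\<^sub>N(\<int>)\<close> an entry two steps above the diagonal is an iterated commutator,
  so it grows cubically in word length.\<close>

lemma word_length_transvection_cube:
  assumes ijkl: "i < j" "j < k" "k < l" "l < N"
    and T: "T \<subseteq> UT N" "generate (UT_group N) T = UT N"
  obtains D where "\<And>a. word_length (UT_group N) T (transvection N i l (int a ^ 3)) \<le> D * a"
proof
  interpret group "UT_group N" by (rule group_UT_group)
  let ?wl = "word_length (UT_group N) T"
  have pow: "?wl (transvection N x y (int a)) \<le> a * ?wl (transvection N x y 1)" if "x < y" "y < N" for x y a
    using word_length_nat_pow[of T "transvection N x y 1" a] transvection_nat_pow[OF that, of a]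
      T transvection_UT[OF that] by simp
  show "?wl (transvection N i l (int a ^ 3)) \<le>
      2 * (2 * (?wl (transvection N i j 1) + ?wl (transvection N j k 1)) + ?wl (transvection N k l 1)) * a" for a
  proof -
    have "?wl (transvection N i l (int a * int a * int a))
        \<le> 2 * (2 * (?wl (transvection N i j (int a)) + ?wl (transvection N j k (int a)))
               + ?wl (transvection N k l (int a)))"
      using word_length_transvection_commutator[OF _ _ _ T, of i k l "int a * int a" "int a"]
        word_length_transvection_commutator[OF _ _ _ T, of i j k "int a" "int a"] ijkl by simp
    also have "\<dots> \<le> 2 * (2 * (a * ?wl (transvection N i j 1) + a * ?wl (transvection N j k 1))
                        + a * ?wl (transvection N k l 1))"
      using pow ijkl by (intro add_mono mult_left_mono) simp_all
    finally show ?thesis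
      by (simp add: power3_eq_cube algebra_simps)
  qed
qed

locale nickel_triangular =
  fixes n :: nat and \<sigma> :: "nat \<Rightarrow> nat"
  assumes n_ge_2: "n \<ge> 2"
    and bij: "bij_betw \<sigma> {..<2*n+2} {..<2*n+2}"
    and triangular: "\<forall>g \<in> carrier (heis n). nickel_rep n \<sigma> g \<in> UT (2*n+2)"
begin

definition pos :: "nat \<Rightarrow> nat" where
  "pos = inv_into {..<2*n+2} \<sigma>"

lemma pos_less: "b < 2*n+2 \<Longrightarrow> pos b < 2*n+2"
  using bij_betw_inv_into[OF bij] unfolding pos_def by (auto simp: bij_betw_def)

lemma \<sigma>_pos: "b < 2*n+2 \<Longrightarrow> \<sigma> (pos b) = b"
  using bij unfolding pos_def by (simp add: bij_betw_inv_into_right)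

lemma pos_\<sigma>: "p < 2*n+2 \<Longrightarrow> pos (\<sigma> p) = p"
  using bij unfolding pos_def by (simp add: bij_betw_inv_into_left)

lemma nickel_rep_eq: "g \<in> heis_carrier n \<Longrightarrow> nickel_rep n \<sigma> g = nickel_matrix n \<sigma> g"
  by (rule nickel_rep_eq_matrix[OF bij])

lemma index_nickel_matrix_pos:
  assumes "x < 2*n+2" "y < 2*n+2"
  shows "nickel_matrix n \<sigma> g $$ (pos x, pos y) = nickel_coeff n g x y"
  using pos_less[OF assms(1)] pos_less[OF assms(2)] \<sigma>_pos[OF assms(1)] \<sigma>_pos[OF assms(2)] by simp

lemma pos_less_if_coeff:
  assumes g: "g \<in> heis_carrier n" and xy: "x < 2*n+2" "y < 2*n+2" "x \<noteq> y"
    and c: "nickel_coeff n g x y \<noteq> 0"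
  shows "pos x < pos y"
proof -
  have "nickel_matrix n \<sigma> g \<in> UT (2*n+2)"
    using triangular g nickel_rep_eq by auto
  then have "\<not> pos y < pos x"
    using UT_below_diag[of _ _ "pos x" "pos y"] index_nickel_matrix_pos[OF xy(1,2)] pos_less[OF xy(1)] c by force
  moreover have "pos x \<noteq> pos y"
    using xy \<sigma>_pos by metis
  ultimately show ?thesis by simp
qed

text \<open>Here \<open>n \<ge> 2\<close> is used: \<open>t\<^sub>2\<^sub>n\<^sub>+\<^sub>1\<close> precedes \<open>t\<^sub>n\<^sub>+\<^sub>1\<close> and \<open>t\<^sub>n\<^sub>+\<^sub>2\<close> (look at \<open>x\<^sub>1\<close>, \<open>x\<^sub>2\<close>),
  which both precede \<open>1\<close> (look at \<open>x\<^sub>n\<^sub>+\<^sub>1\<close>, \<open>x\<^sub>n\<^sub>+\<^sub>2\<close>).\<close>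

lemma center_positions: "\<exists>r s. pos (2*n) < r \<and> r < s \<and> s < pos (2*n+1)"
proof -
  have c: "nickel_coeff n (heis_unit 1 1) (2*n) n \<noteq> 0" "nickel_coeff n (heis_unit 2 1) (2*n) (n+1) \<noteq> 0"
    "nickel_coeff n (heis_unit (n+1) 1) n (2*n+1) \<noteq> 0" "nickel_coeff n (heis_unit (n+2) 1) (n+1) (2*n+1) \<noteq> 0"
    using n_ge_2 by (simp_all add: nickel_coeff_def heis_unit_def)
  have "pos (2*n) < pos n" "pos (2*n) < pos (n+1)" "pos n < pos (2*n+1)" "pos (n+1) < pos (2*n+1)"
    using pos_less_if_coeff[OF heis_unit_carrier _ _ _ c(1)] pos_less_if_coeff[OF heis_unit_carrier _ _ _ c(2)]
      pos_less_if_coeff[OF heis_unit_carrier _ _ _ c(3)] pos_less_if_coeff[OF heis_unit_carrier _ _ _ c(4)]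
      n_ge_2 by simp_all
  moreover have "pos n \<noteq> pos (n+1)"
    using \<sigma>_pos[of n] \<sigma>_pos[of "n+1"] by force
  ultimately show ?thesis
    by (metis linorder_neqE_nat)
qed

lemma nickel_rep_center:
  "nickel_rep n \<sigma> (heis_unit (2*n+1) c) = transvection (2*n+2) (pos (2*n)) (pos (2*n+1)) (- c)"
proof -
  have coeff: "nickel_coeff n (heis_unit (2*n+1) c) b b'
      = (if b = b' then 1 else 0) + (if b = 2*n \<and> b' = 2*n+1 then -c else 0)" for b b'
    by (auto simp: nickel_coeff_def heis_unit_def intro!: sum.neutral)
  have "nickel_matrix n \<sigma> (heis_unit (2*n+1) c) = transvection (2*n+2) (pos (2*n)) (pos (2*n+1)) (- c)"
  proof (rule eq_matI)
    fix a b assume "a < dim_row (transvection (2*n+2) (pos (2*n)) (pos (2*n+1)) (- c))"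
      "b < dim_col (transvection (2*n+2) (pos (2*n)) (pos (2*n+1)) (- c))"
    then have ab: "a < 2*n+2" "b < 2*n+2" by simp_all
    have "(\<sigma> a = \<sigma> b) = (a = b)"
      using ab pos_\<sigma> by metis
    moreover have "(\<sigma> a = 2*n) = (a = pos (2*n))" "(\<sigma> b = 2*n+1) = (b = pos (2*n+1))"
      using pos_\<sigma>[OF ab(1)] pos_\<sigma>[OF ab(2)] \<sigma>_pos[of "2*n"] \<sigma>_pos[of "2*n+1"] by auto
    ultimately show "nickel_matrix n \<sigma> (heis_unit (2*n+1) c) $$ (a,b)
        = transvection (2*n+2) (pos (2*n)) (pos (2*n+1)) (- c) $$ (a,b)"
      using ab by (simp only: index_nickel_matrix index_transvection coeff)
  qed (simp_all add: nickel_matrix_def)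
  then show ?thesis
    using nickel_rep_eq heis_unit_carrier[of "2*n+1" n c] by simp
qed

lemma group_hom_nickel_rep: "group_hom (heis n) (UT_group (2*n+2)) (nickel_rep n \<sigma>)"
proof -
  have "nickel_rep n \<sigma> \<in> hom (heis n) (UT_group (2*n+2))"
    using triangular by (auto simp: hom_def nickel_rep_eq heis_mult_closed nickel_matrix_mult[OF bij])
  then show ?thesis
    by (simp add: group_hom_def group_hom_axioms_def group_heis group_UT_group)
qed

text \<open>The last column of the matrix holds \<open>-g\<^sub>1, \<dots>, -g\<^sub>2\<^sub>n\<close>, and the entry in row
  \<open>t\<^sub>2\<^sub>n\<^sub>+\<^sub>1\<close> of that column then determines \<open>g\<^sub>2\<^sub>n\<^sub>+\<^sub>1\<close>.\<close>

lemma inj_on_nickel_rep: "inj_on (nickel_rep n \<sigma>) (heis_carrier n)"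
proof
  fix x y assume x: "x \<in> heis_carrier n" and y: "y \<in> heis_carrier n"
    and "nickel_rep n \<sigma> x = nickel_rep n \<sigma> y"
  then have eq: "nickel_coeff n x b b' = nickel_coeff n y b b'" if "b < 2*n+2" "b' < 2*n+2" for b b'
    using index_nickel_matrix_pos[OF that, of x] index_nickel_matrix_pos[OF that, of y] nickel_rep_eq by simp
  have shifted: "x (b+1) = y (b+1)" if "b < 2*n" for b
    using eq[of b "2*n+1"] that by (simp add: nickel_coeff_def)
  have low: "x i = y i" if "1 \<le> i" "i \<le> 2*n" for i
  proof -
    have "i - 1 < 2*n" "i - 1 + 1 = i"
      using that by simp_all
    then show ?thesis
      using shifted[of "i - 1"] by simp
  qed
  then have "(\<Sum>k=1..n. x (n+k) * x k) = (\<Sum>k=1..n. y (n+k) * y k)"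
    by (intro sum.cong) auto
  then have top: "x (2*n+1) = y (2*n+1)"
    using eq[of "2*n" "2*n+1"] by (simp add: nickel_coeff_def)
  show "x = y"
  proof
    fix i
    consider "i = 0 \<or> i > 2*n+1" | "1 \<le> i \<and> i \<le> 2*n" | "i = 2*n+1"
      by linarith
    then show "x i = y i"
      by cases (use x y low top in \<open>auto simp: heis_carrier_def\<close>)
  qed
qed

lemma subgroup_nickel_image: "subgroup (nickel_rep n \<sigma> ` heis_carrier n) (UT_group (2*n+2))"
  using group_hom.img_is_subgroup[OF group_hom_nickel_rep] by simp

lemma center_quadratic_bound:
  assumes W: "finite W" "W \<subseteq> nickel_rep n \<sigma> ` heis_carrier n"
  obtains M :: int where "M \<ge> 0" "\<And>ws c. set ws \<subseteq> W \<Longrightarrow>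
      foldr (*) ws (1\<^sub>m (2*n+2)) = transvection (2*n+2) (pos (2*n)) (pos (2*n+1)) (- c) \<Longrightarrow>
      \<bar>c\<bar> \<le> int (length ws) * M + int n * M^2 * int (length ws)^2"
proof
  interpret \<rho>: group_hom "heis n" "UT_group (2*n+2)" "nickel_rep n \<sigma>"
    by (rule group_hom_nickel_rep)
  define pre where "pre = inv_into (heis_carrier n) (nickel_rep n \<sigma>)"
  have pre: "pre w \<in> heis_carrier n" "nickel_rep n \<sigma> (pre w) = w" if "w \<in> W" for w
    using W(2) that unfolding pre_def by (auto simp: inv_into_into f_inv_into_f)
  define M where "M = (\<Sum>w\<in>W. \<Sum>i\<le>2*n+1. \<bar>pre w i\<bar>)"
  show "M \<ge> 0"
    unfolding M_def by (intro sum_nonneg) auto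
  have bound: "\<bar>pre w i\<bar> \<le> M" if w: "w \<in> W" for w i
  proof (cases "i \<le> 2*n+1")
    case True
    have "\<bar>pre w i\<bar> \<le> (\<Sum>i\<le>2*n+1. \<bar>pre w i\<bar>)"
      using True by (intro member_le_sum) auto
    also have "\<dots> \<le> M"
      unfolding M_def using w W(1) by (intro member_le_sum[of w]) (auto intro: sum_nonneg)
    finally show ?thesis .
  next
    case False
    then show ?thesis
      using pre(1)[OF w] \<open>M \<ge> 0\<close> by (auto simp: heis_carrier_def)
  qed
  fix ws c
  assume ws: "set ws \<subseteq> W"
    and prod: "foldr (*) ws (1\<^sub>m (2*n+2)) = transvection (2*n+2) (pos (2*n)) (pos (2*n+1)) (- c)"
  let ?P = "foldr (heis_mult n) (map pre ws) (\<lambda>_. 0)"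
  have pre_ws: "set (map pre ws) \<subseteq> heis_carrier n" "map (nickel_rep n \<sigma>) (map pre ws) = ws"
    using pre ws by (auto simp: map_idI subset_iff)
  have "nickel_rep n \<sigma> ?P = nickel_rep n \<sigma> (heis_unit (2*n+1) c)"
    using \<rho>.hom_foldr_mult[of "map pre ws"] pre_ws prod nickel_rep_center by simp
  then have "?P = heis_unit (2*n+1) c"
    using inj_on_nickel_rep heis_unit_carrier[of "2*n+1" n c] \<rho>.G.foldr_mult_closed[of "map pre ws"] pre_ws
    by (simp add: inj_on_eq_iff)
  moreover have "\<forall>g\<in>set (map pre ws). \<forall>i. \<bar>g i\<bar> \<le> M"
    using bound ws by auto
  ultimately show "\<bar>c\<bar> \<le> int (length ws) * M + int n * M^2 * int (length ws)^2"
    using heis_foldr_bound[of "map pre ws" M n] \<open>M \<ge> 0\<close> by (simp add: heis_unit_def)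
qed

lemma center_transvection_in_image:
  "transvection (2*n+2) (pos (2*n)) (pos (2*n+1)) c \<in> nickel_rep n \<sigma> ` heis_carrier n"
  using nickel_rep_center[of "- c"] imageI[OF heis_unit_carrier[of "2*n+1" n "- c"], of "nickel_rep n \<sigma>"]
  by simp

lemma center_word_length_lower:
  assumes S: "finite S" "S \<subseteq> nickel_rep n \<sigma> ` heis_carrier n"
      "generate (UT_group (2*n+2)) S = nickel_rep n \<sigma> ` heis_carrier n"
  obtains M :: int where "M \<ge> 0"
    "\<And>c k. k = word_length (UT_group (2*n+2)\<lparr>carrier := nickel_rep n \<sigma> ` heis_carrier n\<rparr>) S
                 (transvection (2*n+2) (pos (2*n)) (pos (2*n+1)) (- c))
           \<Longrightarrow> \<bar>c\<bar> \<le> int k * M + int n * M^2 * int k^2"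
proof -
  let ?K = "UT_group (2*n+2)" and ?H = "nickel_rep n \<sigma> ` heis_carrier n"
  interpret K: group ?K by (rule group_UT_group)
  have W: "finite (S \<union> (\<lambda>x. inv\<^bsub>?K\<^esub> x) ` S)"
    using S(1) by simp
  have "inv\<^bsub>?K\<^esub> x \<in> ?H" if "x \<in> S" for x
    using subgroup.m_inv_closed[OF subgroup_nickel_image] S(2) that by blast
  with S(2) have "S \<union> (\<lambda>x. inv\<^bsub>?K\<^esub> x) ` S \<subseteq> ?H"
    by blast
  with W obtain M where M0: "M \<ge> 0" and M: "\<And>ws c. set ws \<subseteq> S \<union> (\<lambda>x. inv\<^bsub>?K\<^esub> x) ` S \<Longrightarrow>
      foldr (*) ws (1\<^sub>m (2*n+2)) = transvection (2*n+2) (pos (2*n)) (pos (2*n+1)) (- c) \<Longrightarrow>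
      \<bar>c\<bar> \<le> int (length ws) * M + int n * M^2 * int (length ws)^2"
    by (rule center_quadratic_bound) blast
  have bound: "\<bar>c\<bar> \<le> int k * M + int n * M^2 * int k^2"
    if k: "k = word_length (?K\<lparr>carrier := ?H\<rparr>) S (transvection (2*n+2) (pos (2*n)) (pos (2*n+1)) (- c))" for c k
  proof -
    let ?h = "transvection (2*n+2) (pos (2*n)) (pos (2*n+1)) (- c)"
    obtain ws where ws: "length ws = word_length (?K\<lparr>carrier := ?H\<rparr>) S ?h"
      "set ws \<subseteq> S \<union> (\<lambda>x. inv\<^bsub>?K\<^esub> x) ` S" "foldr (\<otimes>\<^bsub>?K\<^esub>) ws \<one>\<^bsub>?K\<^esub> = ?h"
      using K.subgroup_word_length_witness[OF subgroup_nickel_image S(2,3) center_transvection_in_image] .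
    have "foldr (*) ws (1\<^sub>m (2*n+2)) = ?h"
      using ws(3) by simp
    from M[OF ws(2) this] ws(1) k show ?thesis
      by simp
  qed
  show ?thesis
    by (rule that[OF M0 bound])
qed

lemma not_linearly_distorted:
  assumes S: "finite S" "S \<subseteq> nickel_rep n \<sigma> ` heis_carrier n"
      "generate (UT_group (2*n+2)) S = nickel_rep n \<sigma> ` heis_carrier n"
    and T: "finite T" "T \<subseteq> UT (2*n+2)" "generate (UT_group (2*n+2)) T = UT (2*n+2)"
  shows "\<not> (\<exists>C::real. \<forall>m. real (distortion_fn (UT_group (2*n+2)) (nickel_rep n \<sigma> ` heis_carrier n) S T m) \<le> C * real m)"
proof
  let ?K = "UT_group (2*n+2)" and ?H = "nickel_rep n \<sigma> ` heis_carrier n"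
  assume "\<exists>C::real. \<forall>m. real (distortion_fn ?K ?H S T m) \<le> C * real m"
  then obtain C :: real where C: "\<And>m. real (distortion_fn ?K ?H S T m) \<le> C * real m"
    by blast
  define p where "p = pos (2*n)"
  define q where "q = pos (2*n+1)"
  obtain r s where "p < r" "r < s" "s < q"
    using center_positions unfolding p_def q_def by blast
  moreover have "q < 2*n+2"
    unfolding q_def by (intro pos_less) simp
  ultimately obtain D where D: "\<And>a. word_length ?K T (transvection (2*n+2) p q (int a ^ 3)) \<le> D * a"
    using T(2,3) by (rule word_length_transvection_cube) blast
  obtain M where M0: "M \<ge> 0" and M: "\<And>c k. k = word_length (?K\<lparr>carrier := ?H\<rparr>) S (transvection (2*n+2) p q (- c))
      \<Longrightarrow> \<bar>c\<bar> \<le> int k * M + int n * M^2 * int k^2"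
    unfolding p_def q_def by (rule center_word_length_lower[OF S]) blast
  define k where "k a = word_length (?K\<lparr>carrier := ?H\<rparr>) S (transvection (2*n+2) p q (int a ^ 3))" for a
  show False
  proof (rule cubic_not_bounded_by_linear_quadratic)
    show "real a ^ 3 \<le> k a * real_of_int M + real n * M^2 * (k a)^2" for a
      using M[of "k a" "- (int a ^ 3)"] unfolding k_def by (simp add: of_int_le_iff[symmetric, where 'a = real])
    have "transvection (2*n+2) p q (int a ^ 3) \<in> ?H" for a
      unfolding p_def q_def by (rule center_transvection_in_image)
    then have dist: "real (k a) \<le> real (distortion_fn ?K ?H S T (D * a))" for a
      unfolding k_def using T D[of a] subgroup_nickel_image
      by (simp only: of_nat_le_iff, intro group.word_length_le_distortion_fn[OF group_UT_group]) simp_all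
    show "k a \<le> C * D * a" for a
      using order_trans[OF dist[of a] C[of "D * a"]] by (simp add: mult.assoc)
  qed (use M0 in simp_all)
qed

end

theorem theorem4p6:
  fixes n :: nat and \<sigma> :: "nat \<Rightarrow> nat"
  assumes "n \<ge> 2"
    and "bij_betw \<sigma> {..<2*n+2} {..<2*n+2}"
    and "\<forall>g \<in> carrier (heis n). nickel_rep n \<sigma> g \<in> UT (2*n+2)"
  shows "distorted_subgroup (UT_group (2*n+2)) (nickel_rep n \<sigma> ` carrier (heis n))"
proof -
  interpret nickel_triangular n \<sigma>
    using assms by unfold_locales
  interpret \<rho>: group_hom "heis n" "UT_group (2*n+2)" "nickel_rep n \<sigma>"
    by (rule group_hom_nickel_rep)
  have gens: "generate (UT_group (2*n+2)) (nickel_rep n \<sigma> ` heis_unit_gens n) = nickel_rep n \<sigma> ` heis_carrier n"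
    using \<rho>.generate_img[of "heis_unit_gens n"] heis_unit_gens_subset generate_heis_unit_gens by simp
  show ?thesis
    unfolding distorted_subgroup_def heis_simps
  proof (intro conjI allI impI)
    show "\<exists>T. finite T \<and> T \<subseteq> carrier (UT_group (2*n+2)) \<and> generate (UT_group (2*n+2)) T = carrier (UT_group (2*n+2))"
      using finite_transvections transvections_subset_UT generate_transvections
      by (intro exI[of _ "transvections (2*n+2)"]) simp
    show "\<exists>S. finite S \<and> S \<subseteq> nickel_rep n \<sigma> ` heis_carrier n \<and> generate (UT_group (2*n+2)) S = nickel_rep n \<sigma> ` heis_carrier n"
      using gens image_mono[OF heis_unit_gens_subset]
      by (intro exI[of _ "nickel_rep n \<sigma> ` heis_unit_gens n"]) (simp add: heis_unit_gens_def)
  qed (use group_UT_group subgroup_nickel_image not_linearly_distorted in auto)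
qed

end
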